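(* Let $\mathcal M$ be a local Moufang set with basis $(0,\infty)$ and let $x\in X$ be a unit. Then there is a unique element $\mu_x\in U_0\alpha_xU_0$ with $0\mu_x=\infty$ and $\infty\mu_x=0$. Moreover $\mu_x=g\alpha_xh$, where $g$ is the unique element of $U_0$ mapping $\infty$ to $-x$ and $h$ is the unique element of $U_0$ mapping $x$ to $\infty$; in particular $g,h\in U_0^\times:=\{u\in U_0\mid \overline u\neq \mathrm{id}\}$.
   Context: Group actions are right actions, written $xg$; conjugation is $g^h=h^{-1}gh$. For a set $X$ with an equivalence relation $\sim$, $\overline{x}$ denotes the class of $x$, $\overline X$ the set of classes, and $\mathrm{Sym}(X,\sim)$ the group of bijections $g$ of $X$ with $x\sim y\iff xg\sim yg$; each such $g$ induces a permutation $\overline g$ of $\overline X$, and for a subgroup $U\le \mathrm{Sym}(X,\sim)$, $\overline U$ is the induced group of permutations of $\overline X$. A local Moufang set consists of a set with equivalence relation $(X,\sim)$ with $|\overline X|>2$ and, for each $x\in X$, a subgroup (root group) $U_x\le\mathrm{Sym}(X,\sim)$ such that: (LM0) if $x\sim y$ then $\overline{U_x}=\overline{U_y}$; (LM1) $U_x$ fixes $x$ and acts sharply transitively on $X\setminus\overline x$; (LM1') $\overline{U_x}$ fixes $\overline x$ and acts sharply transitively on $\overline X\setminus\{\overline x\}$; (LM2) $U_x^g=U_{xg}$ for all $x\in X$ and all $g$ in the little projective group $G:=\langle U_x\mid x\in X\rangle$. A basis is a pair $(0,\infty)$ of points of $X$ with $0\not\sim\infty$ (fixed). For $x\not\sim\infty$,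 $\alpha_x$ denotes the unique element of $U_\infty$ with $0\alpha_x=x$, and $-x:=0\alpha_x^{-1}$. A unit is a point $x\in X$ with $x\not\sim 0$ and $x\not\sim\infty$. *)

theory Defs
  imports Main
begin

text \<open>Permutations are HOL functions that are bijections of X and
  the identity outside X. Group actions are right actions: the point xg is
  written \<open>g x\<close>, so the product gh (first g, then h) is \<open>h \<circ> g\<close>, and the
  conjugate \<open>g^h = h\<inverse> g h\<close> is \<open>h \<circ> g \<circ> h\<inverse>\<close>.\<close>

definition perm_inv :: "'a set \<Rightarrow> ('a \<Rightarrow> 'a) \<Rightarrow> ('a \<Rightarrow> 'a)" where
  "perm_inv X g = (\<lambda>y. if y \<in> X then inv_into X g y else y)"

definition Sym_eq :: "'a set \<Rightarrow> 'a rel \<Rightarrow> ('a \<Rightarrow> 'a) set" where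
  "Sym_eq X R = {g. bij_betw g X X \<and> (\<forall>y. y \<notin> X \<longrightarrow> g y = y) \<and>
      (\<forall>x\<in>X. \<forall>y\<in>X. (x, y) \<in> R \<longleftrightarrow> (g x, g y) \<in> R)}"

definition is_subgroup :: "'a set \<Rightarrow> 'a rel \<Rightarrow> ('a \<Rightarrow> 'a) set \<Rightarrow> bool" where
  "is_subgroup X R U \<longleftrightarrow> U \<subseteq> Sym_eq X R \<and> id \<in> U \<and>
      (\<forall>g\<in>U. \<forall>h\<in>U. h \<circ> g \<in> U) \<and> (\<forall>g\<in>U. perm_inv X g \<in> U)"

definition induced :: "'a set \<Rightarrow> 'a rel \<Rightarrow> ('a \<Rightarrow> 'a) \<Rightarrow> ('a set \<Rightarrow> 'a set)" where
  "induced X R g = (\<lambda>C. if C \<in> X // R then g ` C else C)"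

definition induced_group :: "'a set \<Rightarrow> 'a rel \<Rightarrow> ('a \<Rightarrow> 'a) set \<Rightarrow> ('a set \<Rightarrow> 'a set) set" where
  "induced_group X R U = induced X R ` U"

inductive_set little_proj_group :: "'a set \<Rightarrow> ('a \<Rightarrow> ('a \<Rightarrow> 'a) set) \<Rightarrow> ('a \<Rightarrow> 'a) set"
  for X :: "'a set" and U :: "'a \<Rightarrow> ('a \<Rightarrow> 'a) set" where
  gen: "x \<in> X \<Longrightarrow> u \<in> U x \<Longrightarrow> u \<in> little_proj_group X U"
| one: "id \<in> little_proj_group X U"
| mult: "g \<in> little_proj_group X U \<Longrightarrow> h \<in> little_proj_group X U \<Longrightarrow> h \<circ> g \<in> little_proj_group X U"
| inverse: "g \<in> little_proj_group X U \<Longrightarrow> perm_inv X g \<in> little_proj_group X U"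

definition local_moufang_set :: "'a set \<Rightarrow> 'a rel \<Rightarrow> ('a \<Rightarrow> ('a \<Rightarrow> 'a) set) \<Rightarrow> bool" where
  "local_moufang_set X R U \<longleftrightarrow>
     equiv X R \<and>
     (infinite (X // R) \<or> 2 < card (X // R)) \<and>
     (\<forall>x\<in>X. is_subgroup X R (U x)) \<and>
     \<comment> \<open>(LM0)\<close>
     (\<forall>x\<in>X. \<forall>y\<in>X. (x, y) \<in> R \<longrightarrow> induced_group X R (U x) = induced_group X R (U y)) \<and>
     \<comment> \<open>(LM1)\<close>
     (\<forall>x\<in>X. (\<forall>u\<in>U x. u x = x) \<and>
        (\<forall>y\<in>X - R``{x}. \<forall>z\<in>X - R``{x}. \<exists>!u. u \<in> U x \<and> u y = z)) \<and>
     \<comment> \<open>(LM1')\<close>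
     (\<forall>x\<in>X. (\<forall>v\<in>induced_group X R (U x). v (R``{x}) = R``{x}) \<and>
        (\<forall>C\<in>X // R - {R``{x}}. \<forall>D\<in>X // R - {R``{x}}.
            \<exists>!v. v \<in> induced_group X R (U x) \<and> v C = D)) \<and>
     \<comment> \<open>(LM2)\<close>
     (\<forall>x\<in>X. \<forall>g\<in>little_proj_group X U.
        (\<lambda>u. g \<circ> u \<circ> perm_inv X g) ` U x = U (g x))"

text \<open>\<open>\<alpha>_x\<close>: the unique element of \<open>U_\<infinity>\<close> mapping 0 to x; \<open>-x = 0\<alpha>_x\<inverse>\<close>.\<close>
definition alpha :: "('a \<Rightarrow> ('a \<Rightarrow> 'a) set) \<Rightarrow> 'a \<Rightarrow> 'a \<Rightarrow> 'a \<Rightarrow> ('a \<Rightarrow> 'a)" where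
  "alpha U z w x = (THE a. a \<in> U w \<and> a z = x)"

definition neg :: "'a set \<Rightarrow> ('a \<Rightarrow> ('a \<Rightarrow> 'a) set) \<Rightarrow> 'a \<Rightarrow> 'a \<Rightarrow> 'a \<Rightarrow> 'a" where
  "neg X U z w x = perm_inv X (alpha U z w x) z"

definition double_coset :: "('a \<Rightarrow> 'a) set \<Rightarrow> ('a \<Rightarrow> 'a) \<Rightarrow> ('a \<Rightarrow> 'a) set" where
  "double_coset V a = {v \<circ> a \<circ> u | u v. u \<in> V \<and> v \<in> V}"

end

theory Submission
  imports Defs
begin

text \<open>Both \<open>g\<close> and \<open>h\<close> fix \<open>0\<close>, and \<open>\<alpha>\<^sub>x\<close> fixes \<open>\<infinity>\<close>; hence \<open>g\<alpha>\<^sub>xh\<close> maps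
  \<open>0 \<mapsto> x \<mapsto> \<infinity>\<close> and \<open>\<infinity> \<mapsto> -x \<mapsto> 0 \<mapsto> 0\<close>. Conversely, if \<open>u\<alpha>\<^sub>xv\<close> with \<open>u, v \<in> U\<^sub>0\<close>
  swaps \<open>0\<close> and \<open>\<infinity>\<close>, then \<open>v\<close> maps \<open>x\<close> to \<open>\<infinity>\<close> and \<open>u\<close> maps \<open>\<infinity>\<close> to \<open>-x\<close>, so
  sharp transitivity of \<open>U\<^sub>0\<close> on \<open>X \ \<overline>0\<close> forces \<open>u = g\<close> and \<open>v = h\<close>. Since \<open>g\<close>
  and \<open>h\<close> move a point to an inequivalent one, they act nontrivially on \<open>\<overline>X\<close>.\<close>

lemma Sym_eq_rel_iff:
  "g \<in> Sym_eq X R \<Longrightarrow> a \<in> X \<Longrightarrow> b \<in> X \<Longrightarrow> (g a, g b) \<in> R \<longleftrightarrow> (a, b) \<in> R"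
  unfolding Sym_eq_def by blast

lemma Sym_eq_mapsto: "g \<in> Sym_eq X R \<Longrightarrow> a \<in> X \<Longrightarrow> g a \<in> X"
  unfolding Sym_eq_def bij_betw_def by blast

lemma Sym_eq_inj: "g \<in> Sym_eq X R \<Longrightarrow> a \<in> X \<Longrightarrow> b \<in> X \<Longrightarrow> g a = g b \<Longrightarrow> a = b"
  unfolding Sym_eq_def bij_betw_def inj_on_def by blast

lemma Sym_eq_perm_inv:
  assumes "g \<in> Sym_eq X R" "y \<in> X"
  shows "perm_inv X g y \<in> X" "g (perm_inv X g y) = y"
  using assms unfolding Sym_eq_def perm_inv_def
  by (auto simp: bij_betw_def intro: inv_into_into f_inv_into_f)

lemma induced_neq_id_if_moves_class:
  assumes "equiv X R" "g \<in> Sym_eq X R" "y \<in> X" "(g y, y) \<notin> R"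
  shows "induced X R g \<noteq> id"
proof
  assume "induced X R g = id"
  then have "induced X R g (R``{y}) = R``{y}" by simp
  then have "g ` R``{y} = R``{y}"
    using quotientI[OF \<open>y \<in> X\<close>] unfolding induced_def by simp
  moreover have "y \<in> R``{y}"
    using assms(1,3) by (meson equiv_class_self)
  ultimately have "(y, g y) \<in> R" by blast
  then show False
    using assms(1,4) by (meson equiv_def symD)
qed

locale local_moufang =
  fixes X :: "'a set" and R :: "'a rel" and U :: "'a \<Rightarrow> ('a \<Rightarrow> 'a) set"
  assumes local_moufang_set: "local_moufang_set X R U"
begin

lemma equiv: "equiv X R"
  using local_moufang_set unfolding local_moufang_set_def by (elim conjE)

lemma rel_sym: "(a, b) \<in> R \<Longrightarrow> (b, a) \<in> R"
  using equiv by (meson equiv_def symD)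

lemma root_group_Sym_eq: "y \<in> X \<Longrightarrow> u \<in> U y \<Longrightarrow> u \<in> Sym_eq X R"
proof -
  have "\<forall>y\<in>X. is_subgroup X R (U y)"
    using local_moufang_set unfolding local_moufang_set_def by (elim conjE)
  then show "y \<in> X \<Longrightarrow> u \<in> U y \<Longrightarrow> u \<in> Sym_eq X R"
    unfolding is_subgroup_def by blast
qed

lemma root_group_fixes_and_sharply_transitive:
  "\<forall>y\<in>X. (\<forall>u\<in>U y. u y = y) \<and>
     (\<forall>a\<in>X - R``{y}. \<forall>b\<in>X - R``{y}. \<exists>!u. u \<in> U y \<and> u a = b)"
  using local_moufang_set unfolding local_moufang_set_def by (elim conjE)

lemma root_group_fixes: "y \<in> X \<Longrightarrow> u \<in> U y \<Longrightarrow> u y = y"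
  using root_group_fixes_and_sharply_transitive by blast

lemma root_group_ex1:
  assumes "y \<in> X" "a \<in> X" "(a, y) \<notin> R" "b \<in> X" "(b, y) \<notin> R"
  shows "\<exists>!u. u \<in> U y \<and> u a = b"
proof -
  have "a \<in> X - R``{y}" "b \<in> X - R``{y}"
    using assms rel_sym by blast+
  then show ?thesis
    using root_group_fixes_and_sharply_transitive \<open>y \<in> X\<close> by blast
qed

context
  fixes y a b :: 'a
  assumes transit: "y \<in> X" "a \<in> X" "(a, y) \<notin> R" "b \<in> X" "(b, y) \<notin> R"
begin

lemma alpha_in_root_group: "alpha U a y b \<in> U y"
  and alpha_apply: "alpha U a y b a = b"
  using theI'[OF root_group_ex1[OF transit]] unfolding alpha_def by blast+

lemma alpha_unique: "u \<in> U y \<Longrightarrow> u a = b \<Longrightarrow> alpha U a y b = u"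
  unfolding alpha_def using root_group_ex1[OF transit] by (rule the1_equality) blast

end

context
  fixes z w x :: 'a
  assumes basis: "z \<in> X" "w \<in> X" "(z, w) \<notin> R"
    and unit: "x \<in> X" "(x, z) \<notin> R" "(x, w) \<notin> R"
begin

lemma infinity_zero_not_rel: "(w, z) \<notin> R"
  using basis(3) rel_sym by blast

lemma alpha_unit_in_root_group: "alpha U z w x \<in> U w"
  and alpha_unit_apply: "alpha U z w x z = x"
  using alpha_in_root_group alpha_apply basis(2,1,3) unit(1,3) by blast+

lemma alpha_unit_Sym_eq: "alpha U z w x \<in> Sym_eq X R"
  using root_group_Sym_eq[OF basis(2) alpha_unit_in_root_group] .

lemma alpha_unit_fixes: "alpha U z w x w = w"
  using root_group_fixes[OF basis(2) alpha_unit_in_root_group] .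

lemma neg_in_X: "neg X U z w x \<in> X"
  and alpha_neg: "alpha U z w x (neg X U z w x) = z"
  using Sym_eq_perm_inv[OF alpha_unit_Sym_eq basis(1)] unfolding neg_def by blast+

lemma neg_unit: "(neg X U z w x, z) \<notin> R" "(neg X U z w x, w) \<notin> R"
proof -
  have "(neg X U z w x, z) \<in> R \<longleftrightarrow> (z, x) \<in> R"
    using Sym_eq_rel_iff[OF alpha_unit_Sym_eq neg_in_X basis(1)] alpha_neg alpha_unit_apply
    by simp
  then show "(neg X U z w x, z) \<notin> R"
    using unit(2) rel_sym by blast
  have "(neg X U z w x, w) \<in> R \<longleftrightarrow> (z, w) \<in> R"
    using Sym_eq_rel_iff[OF alpha_unit_Sym_eq neg_in_X basis(2)] alpha_neg alpha_unit_fixes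
    by simp
  then show "(neg X U z w x, w) \<notin> R"
    using basis(3) by blast
qed

text \<open>The elements \<open>g\<close> and \<open>h\<close> of the theorem are themselves \<open>alpha\<close> terms, with
  \<open>U\<^sub>0\<close> in the role of the root group.\<close>

lemma alpha_onto_neg:
  "alpha U w z (neg X U z w x) \<in> U z" "alpha U w z (neg X U z w x) w = neg X U z w x"
  using alpha_in_root_group alpha_apply basis(1,2) infinity_zero_not_rel neg_in_X neg_unit(1)
  by blast+

lemma alpha_onto_infinity: "alpha U x z w \<in> U z" "alpha U x z w x = w"
  using alpha_in_root_group alpha_apply basis(1) unit(1,2) basis(2) infinity_zero_not_rel
  by blast+

lemma swap_in_double_coset_iff:
  "\<mu> \<in> double_coset (U z) (alpha U z w x) \<and> \<mu> z = w \<and> \<mu> w = z \<longleftrightarrow>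
     \<mu> = alpha U x z w \<circ> alpha U z w x \<circ> alpha U w z (neg X U z w x)"
  (is "?swap \<longleftrightarrow> \<mu> = ?h \<circ> ?a \<circ> ?g")
proof
  assume \<mu>: "\<mu> = ?h \<circ> ?a \<circ> ?g"
  have "\<mu> \<in> double_coset (U z) ?a"
    unfolding \<mu> double_coset_def using alpha_onto_neg(1) alpha_onto_infinity(1) by blast
  moreover have "?g z = z" "?h z = z"
    using root_group_fixes[OF basis(1)] alpha_onto_neg(1) alpha_onto_infinity(1) by blast+
  ultimately show ?swap
    using alpha_onto_neg(2) alpha_onto_infinity(2) alpha_unit_apply alpha_unit_fixes alpha_neg
    by (simp add: \<mu>)
next
  assume ?swap
  then obtain u v where uv: "u \<in> U z" "v \<in> U z" "\<mu> = v \<circ> ?a \<circ> u"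
    and swap: "\<mu> z = w" "\<mu> w = z"
    unfolding double_coset_def by blast
  have "u z = z" "v z = z"
    using root_group_fixes[OF basis(1)] uv(1,2) by blast+
  then have "v x = w"
    using swap(1) uv(3) alpha_unit_apply by simp
  then have v: "v = ?h"
    using alpha_unique[OF basis(1) unit(1,2) basis(2) infinity_zero_not_rel uv(2)] by simp
  have uw: "u w \<in> X"
    using Sym_eq_mapsto[OF root_group_Sym_eq[OF basis(1) uv(1)] basis(2)] .
  have auw: "?a (u w) \<in> X"
    using Sym_eq_mapsto[OF alpha_unit_Sym_eq uw] .
  have "v (?a (u w)) = v z"
    using swap(2) uv(3) \<open>v z = z\<close> by simp
  then have "?a (u w) = ?a (neg X U z w x)"
    using Sym_eq_inj[OF root_group_Sym_eq[OF basis(1) uv(2)] auw basis(1)] alpha_neg by simp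
  then have "u w = neg X U z w x"
    using Sym_eq_inj[OF alpha_unit_Sym_eq uw neg_in_X] by simp
  then have "u = ?g"
    using alpha_unique[OF basis(1,2) infinity_zero_not_rel neg_in_X neg_unit(1) uv(1)] by simp
  with uv(3) v show "\<mu> = ?h \<circ> ?a \<circ> ?g" by simp
qed

end

end

theorem mainTheorem3:
  fixes X :: "'a set" and R :: "'a rel" and U :: "'a \<Rightarrow> ('a \<Rightarrow> 'a) set"
    and z w x :: 'a
  assumes lm: "local_moufang_set X R U"
    and basis: "z \<in> X" "w \<in> X" "(z, w) \<notin> R"
    and unit: "x \<in> X" "(x, z) \<notin> R" "(x, w) \<notin> R"
  shows "(\<exists>!\<mu>. \<mu> \<in> double_coset (U z) (alpha U z w x) \<and> \<mu> z = w \<and> \<mu> w = z) \<and>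
         (let g = (THE g. g \<in> U z \<and> g w = neg X U z w x);
              h = (THE h. h \<in> U z \<and> h x = w)
          in (\<exists>!g'. g' \<in> U z \<and> g' w = neg X U z w x) \<and>
             (\<exists>!h'. h' \<in> U z \<and> h' x = w) \<and>
             (THE \<mu>. \<mu> \<in> double_coset (U z) (alpha U z w x) \<and> \<mu> z = w \<and> \<mu> w = z)
               = h \<circ> alpha U z w x \<circ> g \<and>
             g \<in> U z \<and> induced X R g \<noteq> id \<and>
             h \<in> U z \<and> induced X R h \<noteq> id)"
proof -
  interpret local_moufang X R U
    using lm by (rule local_moufang.intro)
  let ?m = "neg X U z w x"
  note g = alpha_onto_neg[OF basis unit] and h = alpha_onto_infinity[OF basis unit]
  have "\<exists>!g. g \<in> U z \<and> g w = ?m"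
    using root_group_ex1[OF basis(1,2) infinity_zero_not_rel[OF basis unit]
        neg_in_X[OF basis unit] neg_unit(1)[OF basis unit]] .
  moreover have "\<exists>!h. h \<in> U z \<and> h x = w"
    using root_group_ex1[OF basis(1) unit(1,2) basis(2) infinity_zero_not_rel[OF basis unit]] .
  moreover have "induced X R (alpha U w z ?m) \<noteq> id"
    using induced_neq_id_if_moves_class[OF equiv root_group_Sym_eq[OF basis(1) g(1)] basis(2)]
      g(2) neg_unit(2)[OF basis unit] by simp
  moreover have "induced X R (alpha U x z w) \<noteq> id"
    using induced_neq_id_if_moves_class[OF equiv root_group_Sym_eq[OF basis(1) h(1)] unit(1)]
      h(2) unit(3) rel_sym by auto
  moreover have "(THE \<mu>. \<mu> \<in> double_coset (U z) (alpha U z w x) \<and> \<mu> z = w \<and> \<mu> w = z)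
      = alpha U x z w \<circ> alpha U z w x \<circ> alpha U w z ?m"
    unfolding swap_in_double_coset_iff[OF basis unit] by simp
  ultimately show ?thesis
    unfolding Let_def alpha_def[symmetric]
    using g(1) h(1) by (intro conjI) (simp_all add: swap_in_double_coset_iff[OF basis unit])
qed

end
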